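(* Suppose that for $m=0$ and all $\mu\in\mathcal{P}(\overline{\mathbb{Z}})$, $$-I(\mu)\le\lim_{\varepsilon\to0^+}\liminf_{n\to\infty}\frac1n\log\mathbb{P}_m\big(\ell_n\in B(\mu,\varepsilon)\big)\quad\text{and}\quad\lim_{\varepsilon\to0^+}\limsup_{n\to\infty}\frac1n\log\mathbb{P}_m\big(\ell_n\in B(\mu,\varepsilon)\big)\le-I(\mu).$$ Then these two inequalities hold for all $m\in\mathbb{Z}$ and all $\mu\in\mathcal{P}(\overline{\mathbb{Z}})$.
   Context: $\overline{\mathbb{Z}}=\mathbb{Z}\cup\{-\infty,+\infty\}$ is the two-point compactification of $\mathbb{Z}$. Let $p:\mathbb{Z}\to[0,1]$ with $0<p(k)<1$ for all $k$ and limits $p_\pm=\lim_{k\to\pm\infty}p(k)\in(0,1)$. Under $\mathbb{P}_m$, $(S_n)_{n\ge1}$ is the Markov chain on $\overline{\mathbb{Z}}$ with $S_1=m$, $\pm\infty$ absorbing, $k\to k+1$ w.p. $p(k)$ and $k\to k-1$ w.p. $1-p(k)$ for $k\in\mathbb{Z}$; $\ell_n=\frac1n\sum_{j=1}^n\delta_{S_j}$. Metric on $\overline{\mathbb{Z}}$: $d(h,k)=|\varphi(h)-\varphi(k)|$ with $\varphi(\pm\infty)=\pm1$, $\varphi(k)=1-2^{-k}$ for $k\ge0$, $\varphi(k)=-1+2^{-|k|}$ for $k<0$. $\|\nu\|=\sup\{\int f\,d\nu: f\text{ 1-Lipschitz for }d,\ \sup|f|\le1\}$ and $B(\mu,\varepsilon)=\{\nu\in\mathcal{P}(\overline{\mathbb{Z}}):\|\nu-\mu\|<\varepsilon\}$.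 For $\mu=\alpha_-\delta_{-\infty}+\alpha_0\mu_0+\alpha_+\delta_{+\infty}$ ($\alpha_\sigma\ge0$ summing to 1, $\mu_0\in\mathcal{P}(\mathbb{Z})$), with $0\cdot\infty=0$: $I(\mu)=\alpha_0 I_{\mathrm{DV}}(\mu_0)+\min\{\alpha_- I^{p_-}_{\mathrm{Cr}}(0)+\alpha_+\inf_{x\in[0,1]}I^{p_+}_{\mathrm{Cr}}(x)\,;\,\alpha_+ I^{p_+}_{\mathrm{Cr}}(0)+\alpha_-\inf_{x\in[-1,0]}I^{p_-}_{\mathrm{Cr}}(x)\}$, where $I_{\mathrm{DV}}(\nu)=\sup_{u_k\ge1}\sum_{k}\nu(k)\log\frac{u_k}{p(k)u_{k+1}+(1-p(k))u_{k-1}}$ and $I^q_{\mathrm{Cr}}(x)=\frac{1-x}{2}\log\frac{1-x}{2(1-q)}+\frac{1+x}{2}\log\frac{1+x}{2q}$ on $[-1,1]$, $+\infty$ elsewhere. *)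

theory Defs
  imports "HOL-Probability.Probability" "HOL-Library.Countable"
begin

datatype zbar = MInf | Fin int | PInf

instance zbar :: countable
  by countable_datatype

fun phiZ :: "zbar \<Rightarrow> real" where
  "phiZ MInf = -1"
| "phiZ PInf = 1"
| "phiZ (Fin k) = (if k \<ge> 0 then 1 - 2 powr (- real_of_int k) else -1 + 2 powr (real_of_int k))"

definition dZ :: "zbar \<Rightarrow> zbar \<Rightarrow> real" where
  "dZ h k = \<bar>phiZ h - phiZ k\<bar>"

text \<open>Bounded-Lipschitz distance ||nu - mu|| between probability measures on zbar
  (probability measures on the countable space zbar are exactly pmfs).\<close>
definition bl_dist :: "zbar pmf \<Rightarrow> zbar pmf \<Rightarrow> real" where
  "bl_dist \<nu> \<mu> = Sup {measure_pmf.expectation \<nu> f - measure_pmf.expectation \<mu> f | f.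
      (\<forall>x y. \<bar>f x - f y\<bar> \<le> dZ x y) \<and> (\<forall>x. \<bar>f x\<bar> \<le> 1)}"

fun step :: "(int \<Rightarrow> real) \<Rightarrow> zbar \<Rightarrow> zbar pmf" where
  "step p MInf = return_pmf MInf"
| "step p PInf = return_pmf PInf"
| "step p (Fin k) = map_pmf (\<lambda>b. if b then Fin (k + 1) else Fin (k - 1)) (bernoulli_pmf (p k))"

text \<open>traj p x n is the law of the list [S_1, ..., S_n] when S_1 = x.\<close>
primrec traj :: "(int \<Rightarrow> real) \<Rightarrow> zbar \<Rightarrow> nat \<Rightarrow> zbar list pmf" where
  "traj p x 0 = return_pmf []"
| "traj p x (Suc n) = map_pmf (Cons x) (bind_pmf (step p x) (\<lambda>y. traj p y n))"

text \<open>Empirical measure ell_n = (1/n) sum_j delta_{S_j} of a nonempty path.\<close>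
definition empirical :: "zbar list \<Rightarrow> zbar pmf" where
  "empirical xs = pmf_of_multiset (mset xs)"

definition ball_prob :: "(int \<Rightarrow> real) \<Rightarrow> int \<Rightarrow> nat \<Rightarrow> zbar pmf \<Rightarrow> real \<Rightarrow> real" where
  "ball_prob p m n \<mu> \<epsilon> =
     measure_pmf.prob (traj p (Fin m) n) {xs. bl_dist (empirical xs) \<mu> < \<epsilon>}"

definition eln :: "real \<Rightarrow> ereal" where
  "eln x = (if x = 0 then - \<infinity> else ereal (ln x))"

definition lower_lim :: "(int \<Rightarrow> real) \<Rightarrow> int \<Rightarrow> zbar pmf \<Rightarrow> ereal" where
  "lower_lim p m \<mu> = Lim (at_right (0::real))
     (\<lambda>\<epsilon>. liminf (\<lambda>n. ereal (1 / real n) * eln (ball_prob p m n \<mu> \<epsilon>)))"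

definition upper_lim :: "(int \<Rightarrow> real) \<Rightarrow> int \<Rightarrow> zbar pmf \<Rightarrow> ereal" where
  "upper_lim p m \<mu> = Lim (at_right (0::real))
     (\<lambda>\<epsilon>. limsup (\<lambda>n. ereal (1 / real n) * eln (ball_prob p m n \<mu> \<epsilon>)))"

text \<open>Cramer rate function of a +-1 step with up-probability q.\<close>
definition cramer :: "real \<Rightarrow> real \<Rightarrow> ereal" where
  "cramer q x = (if x \<in> {-1..1} then
     ereal ((1 - x) / 2 * ln ((1 - x) / (2 * (1 - q))) + (1 + x) / 2 * ln ((1 + x) / (2 * q)))
   else \<infinity>)"

text \<open>Donsker-Varadhan functional on a probability vector nu on Z.\<close>
definition I_DV :: "(int \<Rightarrow> real) \<Rightarrow> (int \<Rightarrow> real) \<Rightarrow> ereal" where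
  "I_DV p \<nu> = (SUP u \<in> {u. (\<forall>k. u k \<ge> 1) \<and>
        (\<lambda>k. \<nu> k * ln (u k / (p k * u (k + 1) + (1 - p k) * u (k - 1)))) summable_on UNIV}.
      ereal (\<Sum>\<^sub>\<infinity>k. \<nu> k * ln (u k / (p k * u (k + 1) + (1 - p k) * u (k - 1)))))"

definition rate :: "(int \<Rightarrow> real) \<Rightarrow> real \<Rightarrow> real \<Rightarrow> zbar pmf \<Rightarrow> ereal" where
  "rate p pm pp \<mu> =
    (let am = pmf \<mu> MInf; ap = pmf \<mu> PInf; a0 = 1 - am - ap;
         \<mu>0 = (\<lambda>k. pmf \<mu> (Fin k) / a0)
     in (if a0 = 0 then 0 else ereal a0 * I_DV p \<mu>0)
        + min (ereal am * cramer pm 0 + ereal ap * (INF x\<in>{0..1}. cramer pp x))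
              (ereal ap * cramer pp 0 + ereal am * (INF x\<in>{-1..0}. cramer pm x)))"

end

theory Submission
  imports Defs
begin

(* Since 0 < p k < 1, any two sites a and b are joined by a fixed path of |a - b| steps that has
   positive probability c. Hence the chain started at a dominates, up to the factor c and a time
   shift by k = |a - b|, the chain started at b. Prepending k points to a path of length n moves its
   empirical measure by at most 2k/n in the bounded-Lipschitz distance, which is absorbed by
   enlarging the radius of the ball, and neither c nor the time shift affects exponential rates. *)

lemma sum_list_map_eq_sum_count_list:
  fixes f :: "'a \<Rightarrow> 'b::comm_semiring_1"
  shows "sum_list (map f xs) = (\<Sum>x\<in>set xs. of_nat (count_list xs x) * f x)"
proof (induction xs)
  case (Cons x xs)
  have "(\<Sum>y\<in>set (x # xs). of_nat (count_list (x # xs) y) * f y)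
      = (\<Sum>y\<in>insert x (set xs). of_nat (count_list xs y) * f y + (if x = y then f y else 0))"
    by (intro sum.cong) (auto simp: distrib_right add.commute)
  also have "\<dots> = (\<Sum>y\<in>insert x (set xs). of_nat (count_list xs y) * f y) + f x"
    by (simp add: sum.distrib)
  also have "\<dots> = sum_list (map f (x # xs))"
    using Cons.IH by (cases "x \<in> set xs") (simp_all add: insert_absorb add.commute)
  finally show ?case ..
qed simp

lemma abs_sum_list_map_le_length:
  fixes f :: "'a \<Rightarrow> real"
  assumes "\<forall>x. \<bar>f x\<bar> \<le> 1"
  shows "\<bar>sum_list (map f zs)\<bar> \<le> length zs"
proof (induction zs)
  case (Cons z zs)
  have "\<bar>f z + sum_list (map f zs)\<bar> \<le> \<bar>f z\<bar> + \<bar>sum_list (map f zs)\<bar>"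
    by (rule abs_triangle_ineq)
  then show ?case using Cons.IH assms[rule_format, of z] by simp
qed simp

lemma mean_append_le:
  fixes a b k n :: real
  assumes "\<bar>a\<bar> \<le> k" "\<bar>b\<bar> \<le> n" "n > 0"
  shows "(a + b) / (k + n) \<le> b / n + 2 * k / n"
proof -
  have "0 \<le> k" "0 \<le> n + b" "0 \<le> k - a"
    using assms by (auto simp: abs_le_iff)
  then have "0 \<le> k * (n + b) + n * (k - a) + 2 * (k * k)"
    using assms(3) by simp
  also have "\<dots> = (b + 2 * k) * (k + n) - (a + b) * n"
    by (simp add: algebra_simps)
  finally have "(a + b) / (k + n) \<le> (b + 2 * k) / n"
    using assms(3) \<open>0 \<le> k\<close> by (simp add: frac_le_eq divide_nonpos_pos)
  then show ?thesis
    by (simp add: add_divide_distrib)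
qed

lemma abs_expectation_le:
  fixes f :: "'a \<Rightarrow> real"
  assumes "\<And>x. \<bar>f x\<bar> \<le> B"
  shows "\<bar>measure_pmf.expectation M f\<bar> \<le> B"
proof -
  have "integrable M f"
    by (rule measure_pmf.integrable_const_bound[where B = B]) (use assms in auto)
  have "\<bar>measure_pmf.expectation M f\<bar> \<le> measure_pmf.expectation M (\<lambda>x. \<bar>f x\<bar>)"
    by (rule integral_abs_bound)
  also have "\<dots> \<le> B"
    using assms \<open>integrable M f\<close> by (intro measure_pmf.integral_le_const) auto
  finally show ?thesis .
qed

lemma expectation_empirical:
  assumes "xs \<noteq> []"
  shows "measure_pmf.expectation (empirical xs) f = sum_list (map f xs) / length xs"
proof -
  have "measure_pmf.expectation (empirical xs) f = (\<Sum>x\<in>set xs. f x * pmf (empirical xs) x)"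
    by (rule integral_measure_pmf_real) (use assms in \<open>auto simp: empirical_def\<close>)
  also have "\<dots> = sum_list (map f xs) / length xs"
    using assms by (simp add: empirical_def count_mset sum_list_map_eq_sum_count_list sum_divide_distrib mult.commute)
  finally show ?thesis .
qed

lemma bl_dist_le_of_expectation_le:
  assumes "\<And>f. (\<forall>x y. \<bar>f x - f y\<bar> \<le> dZ x y) \<Longrightarrow> (\<forall>x. \<bar>f x\<bar> \<le> 1) \<Longrightarrow>
    measure_pmf.expectation \<nu> f \<le> measure_pmf.expectation \<nu>' f + \<delta>"
  shows "bl_dist \<nu> \<mu> \<le> bl_dist \<nu>' \<mu> + \<delta>"
proof -
  let ?D = "\<lambda>\<nu>. {measure_pmf.expectation \<nu> f - measure_pmf.expectation \<mu> f | f.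
      (\<forall>x y. \<bar>f x - f y\<bar> \<le> dZ x y) \<and> (\<forall>x. \<bar>f x\<bar> \<le> 1)}"
  have bdd: "bdd_above (?D \<nu>')"
  proof (rule bdd_aboveI[where M = 2], clarify)
    fix f :: "zbar \<Rightarrow> real"
    assume "\<forall>x. \<bar>f x\<bar> \<le> 1"
    then have "\<bar>measure_pmf.expectation M f\<bar> \<le> 1" for M :: "zbar pmf"
      by (intro abs_expectation_le) simp
    from this[of \<nu>'] this[of \<mu>]
    show "measure_pmf.expectation \<nu>' f - measure_pmf.expectation \<mu> f \<le> 2" by linarith
  qed
  have "measure_pmf.expectation \<nu> (\<lambda>_. 0) - measure_pmf.expectation \<mu> (\<lambda>_. 0) \<in> ?D \<nu>"
    by (auto simp: dZ_def intro!: exI[of _ "\<lambda>_. 0"])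
  then have "?D \<nu> \<noteq> {}" by (metis empty_iff)
  then show ?thesis
    unfolding bl_dist_def
  proof (rule cSup_least, clarify)
    fix f :: "zbar \<Rightarrow> real"
    assume f: "\<forall>x y. \<bar>f x - f y\<bar> \<le> dZ x y" "\<forall>x. \<bar>f x\<bar> \<le> 1"
    have "measure_pmf.expectation \<nu>' f - measure_pmf.expectation \<mu> f \<le> Sup (?D \<nu>')"
      by (rule cSup_upper[OF _ bdd]) (use f in blast)
    with assms[OF f] show "measure_pmf.expectation \<nu> f - measure_pmf.expectation \<mu> f \<le> Sup (?D \<nu>') + \<delta>"
      by linarith
  qed
qed

lemma bl_dist_empirical_append_le:
  assumes "xs \<noteq> []"
  shows "bl_dist (empirical (ys @ xs)) \<mu> \<le> bl_dist (empirical xs) \<mu> + 2 * real (length ys) / length xs"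
proof (rule bl_dist_le_of_expectation_le)
  fix f :: "zbar \<Rightarrow> real"
  assume "\<forall>x. \<bar>f x\<bar> \<le> 1"
  then have sum_le: "\<bar>sum_list (map f zs)\<bar> \<le> length zs" for zs
    by (rule abs_sum_list_map_le_length)
  have "measure_pmf.expectation (empirical (ys @ xs)) f
      = (sum_list (map f ys) + sum_list (map f xs)) / (length ys + length xs)"
    using assms by (simp add: expectation_empirical)
  also have "\<dots> \<le> sum_list (map f xs) / length xs + 2 * real (length ys) / length xs"
    unfolding of_nat_add using assms by (intro mean_append_le sum_le) simp
  also have "\<dots> = measure_pmf.expectation (empirical xs) f + 2 * real (length ys) / length xs"
    using assms by (simp add: expectation_empirical)
  finally show "measure_pmf.expectation (empirical (ys @ xs)) f
      \<le> measure_pmf.expectation (empirical xs) f + 2 * real (length ys) / length xs" .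
qed

lemma length_traj: "xs \<in> set_pmf (traj p x n) \<Longrightarrow> length xs = n"
  by (induction n arbitrary: x xs) (auto simp: set_bind_pmf)

lemma measure_traj_Suc_ge:
  "pmf (step p x) y * measure (traj p y n) {xs. x # xs \<in> S} \<le> measure (traj p x (Suc n)) S"
proof -
  let ?T = "{xs. x # xs \<in> S}"
  have "ennreal (pmf (step p x) y * measure (traj p y n) ?T)
      = emeasure (traj p y n) ?T * emeasure (step p x) {y}"
    by (simp add: measure_pmf.emeasure_eq_measure measure_pmf_single ennreal_mult mult.commute)
  also have "\<dots> = (\<integral>\<^sup>+z. emeasure (traj p y n) ?T * indicator {y} z \<partial>step p x)"
    by (rule nn_integral_cmult_indicator[symmetric]) simp
  also have "\<dots> \<le> (\<integral>\<^sup>+z. emeasure (traj p z n) ?T \<partial>step p x)"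
    by (intro nn_integral_mono) (auto split: split_indicator)
  also have "\<dots> = emeasure (traj p x (Suc n)) S"
    by (simp add: vimage_def)
  finally show ?thesis
    by (simp add: measure_pmf.emeasure_eq_measure)
qed

(* The chain from x, forced along the fixed prefix ys, dominates the chain from y up to the factor c. *)
definition reaches :: "(int \<Rightarrow> real) \<Rightarrow> zbar \<Rightarrow> zbar \<Rightarrow> bool" where
  "reaches p x y \<longleftrightarrow> (\<exists>c>0. \<exists>ys. \<forall>n S.
     c * measure (traj p y n) {xs. ys @ xs \<in> S} \<le> measure (traj p x (length ys + n)) S)"

lemma reaches_refl: "reaches p x x"
  unfolding reaches_def by (intro exI[of _ 1] conjI exI[of _ "[]"]) simp_all

lemma reaches_trans:
  assumes "reaches p x y" "reaches p y z"
  shows "reaches p x z"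
proof -
  obtain c ys where "c > 0" and c:
    "\<And>n S. c * measure (traj p y n) {xs. ys @ xs \<in> S} \<le> measure (traj p x (length ys + n)) S"
    using assms(1) unfolding reaches_def by blast
  obtain d zs where "d > 0" and d:
    "\<And>n S. d * measure (traj p z n) {xs. zs @ xs \<in> S} \<le> measure (traj p y (length zs + n)) S"
    using assms(2) unfolding reaches_def by blast
  have chain: "c * d * measure (traj p z n) {xs. (ys @ zs) @ xs \<in> S}
      \<le> measure (traj p x (length (ys @ zs) + n)) S" for n S
  proof -
    have "c * d * measure (traj p z n) {xs. (ys @ zs) @ xs \<in> S}
        = c * (d * measure (traj p z n) {xs. zs @ xs \<in> {ws. ys @ ws \<in> S}})"
      by simp
    also have "\<dots> \<le> c * measure (traj p y (length zs + n)) {ws. ys @ ws \<in> S}"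
      using \<open>c > 0\<close> d[of n "{ws. ys @ ws \<in> S}"] by (intro mult_left_mono) auto
    also have "\<dots> \<le> measure (traj p x (length (ys @ zs) + n)) S"
      using c by (simp add: add.assoc)
    finally show ?thesis .
  qed
  show ?thesis
    unfolding reaches_def
    using \<open>c > 0\<close> \<open>d > 0\<close> chain by (intro exI[of _ "c * d"] conjI exI[of _ "ys @ zs"] allI) simp_all
qed

lemma reaches_step: "0 < pmf (step p x) y \<Longrightarrow> reaches p x y"
  unfolding reaches_def using measure_traj_Suc_ge
  by (intro exI[of _ "pmf (step p x) y"] conjI exI[of _ "[x]"]) auto

lemma pmf_step_Fin_succ: "0 \<le> p k \<Longrightarrow> p k \<le> 1 \<Longrightarrow> pmf (step p (Fin k)) (Fin (k + 1)) = p k"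
proof -
  assume "0 \<le> p k" "p k \<le> 1"
  moreover have "(\<lambda>b. if b then Fin (k + 1) else Fin (k - 1)) -` {Fin (k + 1)} = {True}"
    by (auto split: if_splits)
  ultimately show ?thesis by (simp add: pmf_map measure_pmf_single)
qed

lemma pmf_step_Fin_pred: "0 \<le> p k \<Longrightarrow> p k \<le> 1 \<Longrightarrow> pmf (step p (Fin k)) (Fin (k - 1)) = 1 - p k"
proof -
  assume "0 \<le> p k" "p k \<le> 1"
  moreover have "(\<lambda>b. if b then Fin (k + 1) else Fin (k - 1)) -` {Fin (k - 1)} = {False}"
    by auto
  ultimately show ?thesis by (simp add: pmf_map measure_pmf_single)
qed

lemma reaches_Fin:
  assumes "\<forall>k. 0 < p k \<and> p k < 1"
  shows "reaches p (Fin a) (Fin b)"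
proof (induction b rule: int_induct[where k = a])
  case base
  show ?case by (rule reaches_refl)
next
  case (step1 i)
  have "reaches p (Fin i) (Fin (i + 1))"
    using assms pmf_step_Fin_succ[of p i] by (intro reaches_step) (simp add: less_imp_le)
  with step1.IH show ?case by (rule reaches_trans)
next
  case (step2 i)
  have "reaches p (Fin i) (Fin (i - 1))"
    using assms pmf_step_Fin_pred[of p i] by (intro reaches_step) (simp add: less_imp_le)
  with step2.IH show ?case by (rule reaches_trans)
qed

lemma ball_prob_ge_of_reaches:
  assumes "reaches p (Fin a) (Fin b)"
  obtains c k where "c > 0" and "\<And>n \<epsilon> \<delta>. 0 < n \<Longrightarrow> 2 * real k / n \<le> \<delta> \<Longrightarrow>
    c * ball_prob p b n \<mu> \<epsilon> \<le> ball_prob p a (k + n) \<mu> (\<epsilon> + \<delta>)"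
proof -
  obtain c ys where "c > 0" and c: "\<And>n S.
    c * measure (traj p (Fin b) n) {xs. ys @ xs \<in> S} \<le> measure (traj p (Fin a) (length ys + n)) S"
    using assms unfolding reaches_def by blast
  have "c * ball_prob p b n \<mu> \<epsilon> \<le> ball_prob p a (length ys + n) \<mu> (\<epsilon> + \<delta>)"
    if "0 < n" "2 * real (length ys) / n \<le> \<delta>" for n \<epsilon> \<delta>
  proof -
    let ?B = "\<lambda>\<epsilon>. {xs. bl_dist (empirical xs) \<mu> < \<epsilon>}"
    have "?B \<epsilon> \<inter> set_pmf (traj p (Fin b) n) \<subseteq> {xs. ys @ xs \<in> ?B (\<epsilon> + \<delta>)}"
    proof clarify
      fix xs
      assume "bl_dist (empirical xs) \<mu> < \<epsilon>" "xs \<in> set_pmf (traj p (Fin b) n)"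
      moreover from this(2) have "length xs = n"
        by (rule length_traj)
      then have "bl_dist (empirical (ys @ xs)) \<mu> \<le> bl_dist (empirical xs) \<mu> + 2 * real (length ys) / n"
        using \<open>0 < n\<close> bl_dist_empirical_append_le[of xs ys \<mu>] by fastforce
      ultimately show "bl_dist (empirical (ys @ xs)) \<mu> < \<epsilon> + \<delta>"
        using that(2) by linarith
    qed
    then have "ball_prob p b n \<mu> \<epsilon> \<le> measure (traj p (Fin b) n) {xs. ys @ xs \<in> ?B (\<epsilon> + \<delta>)}"
      unfolding ball_prob_def by (subst measure_Int_set_pmf[symmetric]) (rule measure_pmf.finite_measure_mono, auto)
    then have "c * ball_prob p b n \<mu> \<epsilon> \<le> c * measure (traj p (Fin b) n) {xs. ys @ xs \<in> ?B (\<epsilon> + \<delta>)}"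
      using \<open>c > 0\<close> by simp
    also have "\<dots> \<le> ball_prob p a (length ys + n) \<mu> (\<epsilon> + \<delta>)"
      unfolding ball_prob_def by (rule c)
    finally show ?thesis .
  qed
  with \<open>c > 0\<close> show thesis
    by (rule that)
qed

definition log_rate :: "(nat \<Rightarrow> real) \<Rightarrow> nat \<Rightarrow> ereal" where
  "log_rate z n = ereal (1 / real n) * eln (z n)"

lemma log_rate_shift_ge:
  assumes "0 \<le> y n" "y n \<le> 1" "0 < c" "0 < n" "c * y n \<le> x (n + k)"
  shows "ereal (ln c / real (n + k)) + log_rate y n \<le> log_rate x (n + k)"
proof (cases "y n = 0")
  case True
  then show ?thesis
    using \<open>0 < n\<close> by (simp add: log_rate_def eln_def)
next
  case False
  with assms have "0 < y n"
    by simp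
  with assms have "0 < x (n + k)"
    by (smt (verit) mult_pos_pos)
  have "ln (y n) / n \<le> ln (y n) / (n + k)"
    using \<open>0 < y n\<close> \<open>y n \<le> 1\<close> \<open>0 < n\<close> by (intro divide_left_mono_neg) auto
  then have "ln c / (n + k) + ln (y n) / n \<le> (ln c + ln (y n)) / (n + k)"
    by (simp add: add_divide_distrib)
  also have "ln c + ln (y n) = ln (c * y n)"
    using \<open>0 < c\<close> \<open>0 < y n\<close> by (simp add: ln_mult)
  also have "ln (c * y n) / (n + k) \<le> ln (x (n + k)) / (n + k)"
    using assms \<open>0 < y n\<close> by (intro divide_right_mono ln_mono) auto
  finally show ?thesis
    using \<open>0 < y n\<close> \<open>0 < x (n + k)\<close> by (simp add: log_rate_def eln_def)
qed

lemma log_rate_le_of_eventually_le: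
  assumes "\<And>n. 0 \<le> y n" "\<And>n. y n \<le> 1" "0 < c"
    and "eventually (\<lambda>n. c * y n \<le> x (n + k)) sequentially"
  shows "liminf (log_rate y) \<le> liminf (log_rate x)" "limsup (log_rate y) \<le> limsup (log_rate x)"
proof -
  let ?e = "\<lambda>n. ereal (ln c / real (n + k))"
  have "?e \<longlonglongrightarrow> 0"
    using LIMSEQ_ignore_initial_segment[OF lim_const_over_n[of "ln c"], of k]
    by (simp add: zero_ereal_def)
  have ev: "eventually (\<lambda>n. ?e n + log_rate y n \<le> log_rate x (n + k)) sequentially"
    using assms(4) eventually_gt_at_top[of 0]
  proof eventually_elim
    case (elim n)
    then show ?case
      using assms(1-3) by (intro log_rate_shift_ge) auto
  qed
  have "liminf (log_rate y) = liminf (\<lambda>n. ?e n + log_rate y n)"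
    using ereal_liminf_lim_add[OF \<open>?e \<longlonglongrightarrow> 0\<close>] by simp
  also have "\<dots> \<le> liminf (\<lambda>n. log_rate x (n + k))"
    using ev by (rule Liminf_mono)
  finally show "liminf (log_rate y) \<le> liminf (log_rate x)"
    by (simp add: liminf_shift_k)
  have "limsup (log_rate y) = limsup (\<lambda>n. ?e n + log_rate y n)"
    using ereal_limsup_lim_add[OF \<open>?e \<longlonglongrightarrow> 0\<close>] by simp
  also have "\<dots> \<le> limsup (\<lambda>n. log_rate x (n + k))"
    using ev by (rule Limsup_mono)
  finally show "limsup (log_rate y) \<le> limsup (log_rate x)"
    by (simp add: limsup_shift_k)
qed

lemma log_rate_ball_prob_le:
  assumes "reaches p (Fin a) (Fin b)" "0 < \<delta>"
  shows "liminf (log_rate (\<lambda>n. ball_prob p b n \<mu> \<epsilon>)) \<le> liminf (log_rate (\<lambda>n. ball_prob p a n \<mu> (\<epsilon> + \<delta>)))"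
    and "limsup (log_rate (\<lambda>n. ball_prob p b n \<mu> \<epsilon>)) \<le> limsup (log_rate (\<lambda>n. ball_prob p a n \<mu> (\<epsilon> + \<delta>)))"
proof -
  obtain c k where "c > 0" and c: "\<And>n. 0 < n \<Longrightarrow> 2 * real k / n \<le> \<delta> \<Longrightarrow>
    c * ball_prob p b n \<mu> \<epsilon> \<le> ball_prob p a (n + k) \<mu> (\<epsilon> + \<delta>)"
    using ball_prob_ge_of_reaches[OF assms(1)] by (metis add.commute)
  have "eventually (\<lambda>n. 2 * real k / n < \<delta>) sequentially"
    using order_tendstoD(2)[OF lim_const_over_n \<open>0 < \<delta>\<close>] .
  then have "eventually (\<lambda>n. c * ball_prob p b n \<mu> \<epsilon> \<le> ball_prob p a (n + k) \<mu> (\<epsilon> + \<delta>)) sequentially"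
    using eventually_gt_at_top[of 0] by eventually_elim (simp add: c)
  then show "liminf (log_rate (\<lambda>n. ball_prob p b n \<mu> \<epsilon>)) \<le> liminf (log_rate (\<lambda>n. ball_prob p a n \<mu> (\<epsilon> + \<delta>)))"
    and "limsup (log_rate (\<lambda>n. ball_prob p b n \<mu> \<epsilon>)) \<le> limsup (log_rate (\<lambda>n. ball_prob p a n \<mu> (\<epsilon> + \<delta>)))"
    using \<open>c > 0\<close> by (auto simp: ball_prob_def intro: log_rate_le_of_eventually_le)
qed

lemma Lim_at_right_0_eq_INF:
  fixes F :: "real \<Rightarrow> 'a::{complete_linorder, linorder_topology}"
  assumes "\<And>a b. 0 < a \<Longrightarrow> a \<le> b \<Longrightarrow> F a \<le> F b"
  shows "Lim (at_right 0) F = (INF \<epsilon>\<in>{0<..}. F \<epsilon>)"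
  using Lim_right_bound[of UNIV 0 F bot] assms by (intro tendsto_Lim) auto

lemma log_rate_mono:
  assumes "0 \<le> y n" "y n \<le> z n"
  shows "log_rate y n \<le> log_rate z n"
proof -
  have "eln (y n) \<le> eln (z n)"
    using assms by (auto simp: eln_def)
  then show ?thesis
    unfolding log_rate_def by (rule ereal_mult_left_mono) simp
qed

lemma ball_prob_mono: "\<epsilon> \<le> \<epsilon>' \<Longrightarrow> ball_prob p m n \<mu> \<epsilon> \<le> ball_prob p m n \<mu> \<epsilon>'"
  unfolding ball_prob_def by (intro measure_pmf.finite_measure_mono) auto

lemma lower_lim_eq_INF:
  "lower_lim p m \<mu> = (INF \<epsilon>\<in>{0<..}. liminf (log_rate (\<lambda>n. ball_prob p m n \<mu> \<epsilon>)))"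
proof -
  have "lower_lim p m \<mu> = Lim (at_right 0) (\<lambda>\<epsilon>. liminf (log_rate (\<lambda>n. ball_prob p m n \<mu> \<epsilon>)))"
    by (simp add: lower_lim_def log_rate_def[abs_def])
  also have "\<dots> = (INF \<epsilon>\<in>{0<..}. liminf (log_rate (\<lambda>n. ball_prob p m n \<mu> \<epsilon>)))"
    by (intro Lim_at_right_0_eq_INF Liminf_mono always_eventually allI log_rate_mono ball_prob_mono)
      (simp_all add: ball_prob_def)
  finally show ?thesis .
qed

lemma upper_lim_eq_INF:
  "upper_lim p m \<mu> = (INF \<epsilon>\<in>{0<..}. limsup (log_rate (\<lambda>n. ball_prob p m n \<mu> \<epsilon>)))"
proof -
  have "upper_lim p m \<mu> = Lim (at_right 0) (\<lambda>\<epsilon>. limsup (log_rate (\<lambda>n. ball_prob p m n \<mu> \<epsilon>)))"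
    by (simp add: upper_lim_def log_rate_def[abs_def])
  also have "\<dots> = (INF \<epsilon>\<in>{0<..}. limsup (log_rate (\<lambda>n. ball_prob p m n \<mu> \<epsilon>)))"
    by (intro Lim_at_right_0_eq_INF Limsup_mono always_eventually allI log_rate_mono ball_prob_mono)
      (simp_all add: ball_prob_def)
  finally show ?thesis .
qed

lemma lower_lim_le_of_reaches:
  assumes "reaches p (Fin a) (Fin b)"
  shows "lower_lim p b \<mu> \<le> lower_lim p a \<mu>"
  unfolding lower_lim_eq_INF
proof (rule INF_mono)
  fix \<epsilon> :: real
  assume "\<epsilon> \<in> {0<..}"
  then show "\<exists>\<epsilon>'\<in>{0<..}. liminf (log_rate (\<lambda>n. ball_prob p b n \<mu> \<epsilon>'))
      \<le> liminf (log_rate (\<lambda>n. ball_prob p a n \<mu> \<epsilon>))"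
    using log_rate_ball_prob_le(1)[OF assms, of "\<epsilon> / 2" \<mu> "\<epsilon> / 2"] by (intro bexI[of _ "\<epsilon> / 2"]) auto
qed

lemma upper_lim_le_of_reaches:
  assumes "reaches p (Fin a) (Fin b)"
  shows "upper_lim p b \<mu> \<le> upper_lim p a \<mu>"
  unfolding upper_lim_eq_INF
proof (rule INF_mono)
  fix \<epsilon> :: real
  assume "\<epsilon> \<in> {0<..}"
  then show "\<exists>\<epsilon>'\<in>{0<..}. limsup (log_rate (\<lambda>n. ball_prob p b n \<mu> \<epsilon>'))
      \<le> limsup (log_rate (\<lambda>n. ball_prob p a n \<mu> \<epsilon>))"
    using log_rate_ball_prob_le(2)[OF assms, of "\<epsilon> / 2" \<mu> "\<epsilon> / 2"] by (intro bexI[of _ "\<epsilon> / 2"]) auto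
qed

theorem lemma2p2:
  fixes p :: "int \<Rightarrow> real" and pm pp :: real
  assumes "\<forall>k. 0 < p k \<and> p k < 1"
    and "(p \<longlongrightarrow> pm) at_bot" and "(p \<longlongrightarrow> pp) at_top"
    and "0 < pm" and "pm < 1" and "0 < pp" and "pp < 1"
    and "\<forall>\<mu>. - rate p pm pp \<mu> \<le> lower_lim p 0 \<mu> \<and> upper_lim p 0 \<mu> \<le> - rate p pm pp \<mu>"
  shows "\<forall>m \<mu>. - rate p pm pp \<mu> \<le> lower_lim p m \<mu> \<and> upper_lim p m \<mu> \<le> - rate p pm pp \<mu>"
proof (intro allI)
  fix m \<mu>
  have "lower_lim p m \<mu> = lower_lim p 0 \<mu>"
    by (intro antisym lower_lim_le_of_reaches reaches_Fin assms(1))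
  moreover have "upper_lim p m \<mu> = upper_lim p 0 \<mu>"
    by (intro antisym upper_lim_le_of_reaches reaches_Fin assms(1))
  ultimately
  show "- rate p pm pp \<mu> \<le> lower_lim p m \<mu> \<and> upper_lim p m \<mu> \<le> - rate p pm pp \<mu>"
    using assms(8) by simp
qed

end
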